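(* There is an integer $k_0$ such that for any $k\ge k_0$ and any density $\alpha\le\alpha_0$ the following holds w.h.p. over the choice of the random $k$-CNF formula $\Phi=\Phi(k,n,\lfloor\alpha n\rfloor)$. For any set of good variables $V$ that is $r_0$-distributed we have $|V|\ge(r_0-\delta)(k\alpha/\Delta)n$.
   Context: The random $k$-CNF formula $\Phi(k,n,m)=(\mathcal V,\mathcal C)$ is uniform over $k$-CNF formulas with $n$ variables and $m$ clauses of $k$ literals each (repetitions allowed); w.h.p. means with probability $1-o(1)$ as $n\to\infty$. For a clause $c$, $\mathrm{var}(c)$ is its set of variables; the degree of a variable is its number of literal occurrences. Constants: $r_0=0.117841$, $\delta=0.00001$, $\Delta=\lceil 2^{(r_0-2\delta)k}\rceil$, $\alpha_0=2^{(r_0-2\delta)k}/k^3$; high-degree means degree at least $\Delta$. Bad variables/clauses: $\mathcal V_0$ = high-degree variables, $\mathcal C_0$ = clauses with at least 3 variables in $\mathcal V_0$; for $i\ge1$, $\mathcal V_i=\mathcal V_{i-1}\cup\mathrm{var}(\mathcal C_{i-1})$, $\mathcal C_i=\{c:|\mathrm{var}(c)\cap\mathcal V_i|\ge3\}$, until $\mathcal V_i=\mathcal V_{i-1}$; $\mathcal V_{\mathrm{bad}}=\mathcal V_i$, $\mathcal C_{\mathrm{bad}}=\mathcal C_i$; good variables/clauses are the complements. A set $V$ of good variables is $r_0$-distributed if $|\mathrm{var}(c)\cap V|\ge r_0(k-3)$ for every good clause $c$. *)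

theory Defs
  imports Complex_Main
begin

(* Literals are pairs (variable, sign) with variables in {0..<n};
   a k-clause is a list of k literals; a formula is a list of m clauses
   (repetitions allowed, clauses indexed by position j < m). *)

type_synonym literal = "nat \<times> bool"
type_synonym clause = "literal list"
type_synonym formula = "clause list"

definition kcnf_space :: "nat \<Rightarrow> nat \<Rightarrow> nat \<Rightarrow> formula set" where
  "kcnf_space k n m = {F. length F = m \<and>
     (\<forall>c\<in>set F. length c = k \<and> (\<forall>l\<in>set c. fst l < n))}"

definition kcnf_prob :: "nat \<Rightarrow> nat \<Rightarrow> nat \<Rightarrow> (formula \<Rightarrow> bool) \<Rightarrow> real" where
  "kcnf_prob k n m P =
     real (card {F \<in> kcnf_space k n m. P F}) / real (card (kcnf_space k n m))"

definition r0 :: real where "r0 = 0.117841"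
definition delta :: real where "delta = 0.00001"

definition Delta :: "nat \<Rightarrow> nat" where
  "Delta k = nat \<lceil>2 powr ((r0 - 2 * delta) * real k)\<rceil>"

definition alpha0 :: "nat \<Rightarrow> real" where
  "alpha0 k = 2 powr ((r0 - 2 * delta) * real k) / real k ^ 3"

definition clause_vars :: "clause \<Rightarrow> nat set" where
  "clause_vars c = fst ` set c"

definition degree :: "formula \<Rightarrow> nat \<Rightarrow> nat" where
  "degree F x = sum_list (map (\<lambda>c. length (filter (\<lambda>l. fst l = x) c)) F)"

definition high_degree_vars :: "nat \<Rightarrow> nat \<Rightarrow> formula \<Rightarrow> nat set" where
  "high_degree_vars k n F = {x \<in> {0..<n}. Delta k \<le> degree F x}"

definition clauses_hitting :: "formula \<Rightarrow> nat set \<Rightarrow> nat set" where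
  "clauses_hitting F V = {j. j < length F \<and> 3 \<le> card (clause_vars (F ! j) \<inter> V)}"

fun Vseq :: "nat \<Rightarrow> nat \<Rightarrow> formula \<Rightarrow> nat \<Rightarrow> nat set" where
  "Vseq k n F 0 = high_degree_vars k n F"
| "Vseq k n F (Suc i) = Vseq k n F i \<union>
     (\<Union>j\<in>clauses_hitting F (Vseq k n F i). clause_vars (F ! j))"

(* the sequence is increasing and bounded, so its union is the stable value V_i *)
definition V_bad :: "nat \<Rightarrow> nat \<Rightarrow> formula \<Rightarrow> nat set" where
  "V_bad k n F = (\<Union>i. Vseq k n F i)"

definition C_bad :: "nat \<Rightarrow> nat \<Rightarrow> formula \<Rightarrow> nat set" where
  "C_bad k n F = clauses_hitting F (V_bad k n F)"

definition good_vars :: "nat \<Rightarrow> nat \<Rightarrow> formula \<Rightarrow> nat set" where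
  "good_vars k n F = {0..<n} - V_bad k n F"

definition good_clauses :: "nat \<Rightarrow> nat \<Rightarrow> formula \<Rightarrow> nat set" where
  "good_clauses k n F = {0..<length F} - C_bad k n F"

definition r0_distributed :: "nat \<Rightarrow> nat \<Rightarrow> formula \<Rightarrow> nat set \<Rightarrow> bool" where
  "r0_distributed k n F V \<longleftrightarrow> V \<subseteq> good_vars k n F \<and>
     (\<forall>j\<in>good_clauses k n F.
        r0 * (real k - 3) \<le> real (card (clause_vars (F ! j) \<inter> V)))"

end

theory Submission
  imports Defs "HOL-Library.FuncSet"
begin

text \<open>A good clause has at least \<open>r0 (k - 3)\<close> of its variables in \<open>V\<close>, while a good
  variable occurs fewer than \<open>\<Delta>\<close> times; double counting gives
  \<open>|V| \<Delta> \<ge> r0 (k - 3) \<cdot> #good clauses\<close>. So it suffices that w.h.p. few of the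
  \<open>m = \<lfloor>\<alpha> n\<rfloor>\<close> clauses are bad. Two first-moment estimates provide this: fewer than
  \<open>\<lambda> n\<close> variables have degree \<open>\<ge> \<Delta>\<close>, with \<open>\<lambda> = 2e (e k \<alpha> / \<Delta>)\<^sup>\<Delta>\<close> far
  below \<open>\<alpha>\<close>, and every set of \<open>t \<le> \<lambda> n\<close> clauses spans at least \<open>(k - 2) t\<close> variables.
  Under this expansion the peeling process defining the bad clauses stays small: a clause
  is added only when three of its variables are already bad, so it brings at most \<open>k - 3\<close>
  new ones, and hence there are at most \<open>|V\<^sub>0|\<close> bad clauses. For large \<open>k\<close> the loss
  of \<open>\<lambda> n\<close> clauses fits in the gap between \<open>r0 (k - 3)\<close> and \<open>(r0 - \<delta>) k\<close>.\<close>

section \<open>Elementary estimates\<close>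

lemma power_div_fact_le_exp:
  fixes x :: real
  assumes "0 \<le> x"
  shows "x ^ n / fact n \<le> exp x"
proof -
  have summable: "summable (\<lambda>i. x ^ i /\<^sub>R fact i)"
    using exp_converges sums_summable by blast
  have "(\<Sum>i\<in>{n}. x ^ i /\<^sub>R fact i) \<le> (\<Sum>i. x ^ i /\<^sub>R fact i)"
    by (rule sum_le_suminf[OF summable]) (use assms in auto)
  also have "\<dots> = exp x"
    using exp_converges sums_unique by metis
  finally show ?thesis
    by (simp add: divide_inverse mult.commute)
qed

lemma binomial_le_exp_mult_div_power:
  "real (n choose s) \<le> (exp 1 * real n / real s) ^ s"
proof (cases "s = 0")
  case False
  have "real (n choose s) * fact s \<le> real n ^ s"
    by (metis binomial_fact_pow of_nat_fact of_nat_le_iff of_nat_mult of_nat_power)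
  then have "real (n choose s) \<le> (real n / real s) ^ s * (real s ^ s / fact s)"
    using False by (simp add: field_simps)
  also have "\<dots> \<le> (real n / real s) ^ s * exp 1 ^ s"
    using power_div_fact_le_exp[of "real s" s]
    by (intro mult_left_mono) (simp_all add: exp_of_nat_mult[symmetric])
  also have "\<dots> = (exp 1 * real n / real s) ^ s"
    by (simp add: power_mult_distrib[symmetric] ac_simps)
  finally show ?thesis .
qed simp

lemma binomial_mult_ratio_power_le:
  assumes "0 < n"
  shows "real (n choose s) * (real s / real n) ^ s \<le> exp 1 ^ s"
proof (cases "s = 0")
  case False
  have "real (n choose s) * (real s / real n) ^ s \<le> (exp 1 * real n / real s) ^ s * (real s / real n) ^ s"
    by (intro mult_right_mono binomial_le_exp_mult_div_power) simp
  also have "\<dots> = exp 1 ^ s"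
    using assms False by (simp add: power_mult_distrib[symmetric] ac_simps)
  finally show ?thesis .
qed simp

lemma real_nat_ceiling_less:
  fixes x :: real
  assumes "0 \<le> x"
  shows "real (nat \<lceil>x\<rceil>) < x + 1"
proof -
  have "real (nat \<lceil>x\<rceil>) = of_int \<lceil>x\<rceil>"
    using assms by simp
  then show ?thesis
    using ceiling_correct[of x] by linarith
qed

lemma less_two_powr:
  fixes z :: real
  assumes "0 \<le> z"
  shows "z < 2 powr z"
proof -
  define j where "j = nat \<lfloor>z\<rfloor>"
  have "real j \<le> z" "z < real j + 1"
    unfolding j_def using assms by (simp_all add: of_nat_floor)
  have "j + 1 \<le> (2::nat) ^ j"
    using less_exp[of j] by (simp add: Suc_le_eq)
  then have "real j + 1 \<le> 2 ^ j"
    using of_nat_le_iff[of "j + 1" "2 ^ j", where 'a = real] by simp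
  also have "(2::real) ^ j = 2 powr real j"
    by (simp add: powr_realpow)
  also have "\<dots> \<le> 2 powr z"
    using \<open>real j \<le> z\<close> by (rule powr_mono) simp
  finally show ?thesis
    using \<open>z < real j + 1\<close> by linarith
qed

lemma three_power_mult_le_power:
  fixes k D :: nat
  assumes "8 \<le> k" "k \<le> D"
  shows "8 * 3 ^ k * D \<le> k ^ (D + 1)"
proof -
  have "8 * 3 ^ k * D \<le> 8 * 3 ^ D * 2 ^ D"
    using assms(2) less_exp[of D] by (intro mult_mono power_increasing) simp_all
  also have "\<dots> = 8 * 6 ^ D"
    by (simp add: power_mult_distrib[symmetric])
  also have "\<dots> \<le> k * k ^ D"
    using assms(1) by (intro mult_mono power_mono) simp_all
  finally show ?thesis
    by simp
qed

lemma sum_mult_half_power_eq: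
  "(\<Sum>t=1..T. real t * (1 / 2) ^ (t - 1)) = 4 - 2 * (real T + 2) * (1 / 2) ^ T"
proof (induction T)
  case (Suc T)
  have "(\<Sum>t=1..Suc T. real t * (1 / 2) ^ (t - 1))
      = 4 - 2 * (real T + 2) * (1 / 2) ^ T + real (Suc T) * (1 / 2) ^ T"
    using Suc.IH by simp
  also have "\<dots> = 4 - 2 * (real (Suc T) + 2) * (1 / 2) ^ Suc T"
    by (simp add: field_simps)
  finally show ?case .
qed simp

lemma sum_ratio_power_le:
  fixes c :: real
  assumes "0 \<le> c" "0 < n" "c * real T / real n \<le> 1 / 2"
  shows "(\<Sum>t=1..T. (c * real t / real n) ^ t) \<le> 4 * c / real n"
proof -
  have "(c * real t / real n) ^ t \<le> c / real n * (real t * (1 / 2) ^ (t - 1))" if "t \<in> {1..T}" for t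
  proof -
    have "c * real t \<le> c * real T"
      using that assms(1) by (intro mult_left_mono) auto
    then have x: "0 \<le> c * real t / real n" "c * real t / real n \<le> 1 / 2"
      using assms(1) order_trans[OF divide_right_mono assms(3)] by simp_all
    have "(c * real t / real n) ^ t = (c * real t / real n) * (c * real t / real n) ^ (t - 1)"
      using that by (simp add: power_eq_if)
    also have "\<dots> \<le> (c * real t / real n) * (1 / 2) ^ (t - 1)"
      using x by (intro mult_left_mono power_mono) simp_all
    finally show ?thesis
      by simp
  qed
  then have "(\<Sum>t=1..T. (c * real t / real n) ^ t) \<le> (\<Sum>t=1..T. c / real n * (real t * (1 / 2) ^ (t - 1)))"
    by (rule sum_mono)
  also have "\<dots> = c / real n * (\<Sum>t=1..T. real t * (1 / 2) ^ (t - 1))"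
    by (rule sum_distrib_left[symmetric])
  also have "\<dots> \<le> c / real n * 4"
    using assms(1) unfolding sum_mult_half_power_eq by (intro mult_left_mono) simp_all
  finally show ?thesis
    by (simp add: mult.commute)
qed

section \<open>The uniform distribution on \<open>k\<close>-CNF formulas\<close>

lemma kcnf_space_iff_nth:
  "F \<in> kcnf_space k n m \<longleftrightarrow>
     length F = m \<and> (\<forall>j<m. length (F ! j) = k \<and> (\<forall>i<k. fst (F ! j ! i) < n))"
proof -
  have "(\<forall>c\<in>set F. length c = k \<and> (\<forall>l\<in>set c. fst l < n)) \<longleftrightarrow>
      (\<forall>j<length F. length (F ! j) = k \<and> (\<forall>i<length (F ! j). fst (F ! j ! i) < n))"
    by (simp add: all_set_conv_all_nth)
  also have "\<dots> \<longleftrightarrow> (\<forall>j<length F. length (F ! j) = k \<and> (\<forall>i<k. fst (F ! j ! i) < n))"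
    by metis
  finally show ?thesis
    unfolding kcnf_space_def by auto
qed

lemma finite_lists_nth_in:
  assumes "\<And>j. j < m \<Longrightarrow> finite (A j)"
  shows "finite {xs. length xs = m \<and> (\<forall>j<m. xs ! j \<in> A j)}"
proof (rule finite_subset)
  show "{xs. length xs = m \<and> (\<forall>j<m. xs ! j \<in> A j)} \<subseteq> {xs. set xs \<subseteq> (\<Union>j<m. A j) \<and> length xs = m}"
    by (fastforce simp: in_set_conv_nth)
  show "finite {xs. set xs \<subseteq> (\<Union>j<m. A j) \<and> length xs = m}"
    using assms by (intro finite_lists_length_eq) auto
qed

lemma card_lists_nth_in:
  assumes "\<And>j. j < m \<Longrightarrow> finite (A j)"
  shows "card {xs. length xs = m \<and> (\<forall>j<m. xs ! j \<in> A j)} = (\<Prod>j<m. card (A j))"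
proof -
  let ?L = "{xs. length xs = m \<and> (\<forall>j<m. xs ! j \<in> A j)}"
  have "bij_betw (\<lambda>xs. restrict (nth xs) {..<m}) ?L (PiE {..<m} A)"
  proof (rule bij_betw_byWitness[where f' = "\<lambda>f. map f [0..<m]"])
    show "\<forall>xs\<in>?L. map (restrict (nth xs) {..<m}) [0..<m] = xs"
      by (auto intro!: nth_equalityI)
    show "\<forall>f\<in>PiE {..<m} A. restrict (nth (map f [0..<m])) {..<m} = f"
    proof
      fix f
      assume f: "f \<in> PiE {..<m} A"
      show "restrict (nth (map f [0..<m])) {..<m} = f"
      proof
        fix x
        show "restrict (nth (map f [0..<m])) {..<m} x = f x"
          using f by (cases "x < m") (simp, metis PiE_arb lessThan_iff restrict_apply)
      qed
    qed
    show "(\<lambda>xs. restrict (nth xs) {..<m}) ` ?L \<subseteq> PiE {..<m} A"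
      by (rule image_subsetI) (simp only: restrict_PiE_iff mem_Collect_eq lessThan_iff, blast)
    show "(\<lambda>f. map f [0..<m]) ` PiE {..<m} A \<subseteq> ?L"
      by (rule image_subsetI) (simp add: PiE_iff)
  qed
  then have "card ?L = card (PiE {..<m} A)"
    by (rule bij_betw_same_card)
  also have "\<dots> = (\<Prod>j<m. card (A j))"
    by (rule card_PiE) simp
  finally show ?thesis .
qed

definition vars_at_in :: "(nat \<times> nat) set \<Rightarrow> nat set \<Rightarrow> formula \<Rightarrow> bool" where
  "vars_at_in P S F \<longleftrightarrow> (\<forall>(j, i)\<in>P. fst (F ! j ! i) \<in> S)"

lemma kcnf_space_vars_at_in_eq:
  assumes "S \<subseteq> {..<n}" "P \<subseteq> {..<m} \<times> {..<k}"
  shows "{F \<in> kcnf_space k n m. vars_at_in P S F} =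
    {F. length F = m \<and> (\<forall>j<m. F ! j \<in>
      {c. length c = k \<and> (\<forall>i<k. c ! i \<in> (if (j, i) \<in> P then S else {..<n}) \<times> UNIV)})}"
proof -
  have "F \<in> kcnf_space k n m \<and> vars_at_in P S F \<longleftrightarrow> length F = m \<and>
      (\<forall>j<m. length (F ! j) = k \<and> (\<forall>i<k. fst (F ! j ! i) \<in> (if (j, i) \<in> P then S else {..<n})))"
    for F :: formula
    using assms unfolding kcnf_space_iff_nth vars_at_in_def by (auto 0 3 split: if_split_asm)
  then show ?thesis
    by (auto simp: mem_Times_iff)
qed

lemma card_kcnf_space_vars_at_in:
  assumes "S \<subseteq> {..<n}" "P \<subseteq> {..<m} \<times> {..<k}"
  shows "card {F \<in> kcnf_space k n m. vars_at_in P S F} =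
     (2 * card S) ^ card P * (2 * n) ^ (m * k - card P)"
proof -
  have "finite S"
    using assms(1) by (rule finite_subset) simp
  let ?X = "\<lambda>j i. (if (j, i) \<in> P then S else {..<n}) \<times> (UNIV :: bool set)"
  have finite_X: "finite (?X j i)" for j i
    using \<open>finite S\<close> by simp
  have "card {F \<in> kcnf_space k n m. vars_at_in P S F} =
     (\<Prod>j<m. card {c. length c = k \<and> (\<forall>i<k. c ! i \<in> ?X j i)})"
    unfolding kcnf_space_vars_at_in_eq[OF assms]
    by (rule card_lists_nth_in, rule finite_lists_nth_in[OF finite_X])
  also have "\<dots> = (\<Prod>j<m. \<Prod>i<k. card (?X j i))"
    by (rule prod.cong[OF refl], rule card_lists_nth_in[OF finite_X])
  also have "\<dots> = (\<Prod>(j, i)\<in>{..<m} \<times> {..<k}. card (?X j i))"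
    by (rule prod.cartesian_product)
  also have "\<dots> = (\<Prod>p\<in>{..<m} \<times> {..<k}. if p \<in> P then 2 * card S else 2 * n)"
    by (intro prod.cong refl) (auto simp: card_cartesian_product)
  also have "\<dots> = (2 * card S) ^ card P * (2 * n) ^ card ({..<m} \<times> {..<k} - P)"
    using assms(2) by (simp add: prod.If_cases Int_absorb1 Diff_eq[symmetric])
  also have "card ({..<m} \<times> {..<k} - P) = m * k - card P"
    using assms(2) by (simp add: card_Diff_subset finite_subset card_cartesian_product)
  finally show ?thesis .
qed

lemma card_kcnf_space: "card (kcnf_space k n m) = (2 * n) ^ (m * k)"
  using card_kcnf_space_vars_at_in[of "{}" n "{}" m k] by (simp add: vars_at_in_def)

lemma finite_kcnf_space: "finite (kcnf_space k n m)"
proof -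
  have "finite {F. length F = m \<and>
      (\<forall>j<m. F ! j \<in> {c. length c = k \<and> (\<forall>i<k. c ! i \<in> {..<n} \<times> (UNIV :: bool set))})}"
    by (intro finite_lists_nth_in) simp
  also have "{F. length F = m \<and>
      (\<forall>j<m. F ! j \<in> {c. length c = k \<and> (\<forall>i<k. c ! i \<in> {..<n} \<times> (UNIV :: bool set))})} =
      kcnf_space k n m"
    by (auto simp: kcnf_space_iff_nth mem_Times_iff)
  finally show ?thesis .
qed

lemma kcnf_prob_vars_at_in:
  assumes "S \<subseteq> {..<n}" "P \<subseteq> {..<m} \<times> {..<k}" "0 < n"
  shows "kcnf_prob k n m (vars_at_in P S) = (real (card S) / real n) ^ card P"
proof -
  have "card P \<le> m * k"
    using card_mono[OF _ assms(2)] by (simp add: card_cartesian_product)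
  then have "(2 * n) ^ (m * k) = (2 * n) ^ card P * (2 * n) ^ (m * k - card P)"
    by (metis le_add_diff_inverse power_add)
  then show ?thesis
    using assms unfolding kcnf_prob_def card_kcnf_space_vars_at_in[OF assms(1,2)] card_kcnf_space
    by (simp add: power_divide)
qed

lemma kcnf_prob_le_1: "kcnf_prob k n m P \<le> 1"
proof -
  have "card {F \<in> kcnf_space k n m. P F} \<le> card (kcnf_space k n m)"
    by (rule card_mono[OF finite_kcnf_space]) auto
  then show ?thesis
    unfolding kcnf_prob_def by (cases "card (kcnf_space k n m) = 0") simp_all
qed

lemma kcnf_prob_mono:
  assumes "\<And>F. F \<in> kcnf_space k n m \<Longrightarrow> P F \<Longrightarrow> Q F"
  shows "kcnf_prob k n m P \<le> kcnf_prob k n m Q"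
proof -
  have "card {F \<in> kcnf_space k n m. P F} \<le> card {F \<in> kcnf_space k n m. Q F}"
    using assms finite_kcnf_space by (intro card_mono) auto
  then show ?thesis
    unfolding kcnf_prob_def by (simp add: divide_right_mono)
qed

lemma kcnf_prob_Bex_le:
  assumes "finite X"
  shows "kcnf_prob k n m (\<lambda>F. \<exists>x\<in>X. Q x F) \<le> (\<Sum>x\<in>X. kcnf_prob k n m (Q x))"
proof -
  have "{F \<in> kcnf_space k n m. \<exists>x\<in>X. Q x F} = (\<Union>x\<in>X. {F \<in> kcnf_space k n m. Q x F})"
    by blast
  then have "card {F \<in> kcnf_space k n m. \<exists>x\<in>X. Q x F} \<le> (\<Sum>x\<in>X. card {F \<in> kcnf_space k n m. Q x F})"
    using card_UN_le[OF assms] by simp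
  then have "real (card {F \<in> kcnf_space k n m. \<exists>x\<in>X. Q x F})
      \<le> (\<Sum>x\<in>X. real (card {F \<in> kcnf_space k n m. Q x F}))"
    unfolding of_nat_sum[symmetric] of_nat_le_iff .
  then have "real (card {F \<in> kcnf_space k n m. \<exists>x\<in>X. Q x F}) / real (card (kcnf_space k n m))
      \<le> (\<Sum>x\<in>X. real (card {F \<in> kcnf_space k n m. Q x F})) / real (card (kcnf_space k n m))"
    by (rule divide_right_mono) simp
  then show ?thesis
    unfolding kcnf_prob_def by (simp add: sum_divide_distrib)
qed

lemma kcnf_prob_ge_1_minus:
  assumes "0 < n" and "\<And>F. F \<in> kcnf_space k n m \<Longrightarrow> \<not> A F \<Longrightarrow> \<not> B F \<Longrightarrow> Q F"
  shows "1 - kcnf_prob k n m A - kcnf_prob k n m B \<le> kcnf_prob k n m Q"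
proof -
  let ?E = "\<lambda>P. {F \<in> kcnf_space k n m. P F}"
  have "kcnf_space k n m \<subseteq> ?E Q \<union> ?E A \<union> ?E B"
    using assms(2) by blast
  then have "card (kcnf_space k n m) \<le> card (?E Q \<union> ?E A \<union> ?E B)"
    by (intro card_mono) (simp_all add: finite_kcnf_space)
  also have "\<dots> \<le> card (?E Q) + card (?E A) + card (?E B)"
    by (meson card_Un_le add_right_mono le_trans)
  moreover have "0 < card (kcnf_space k n m)"
    using assms(1) by (simp add: card_kcnf_space)
  ultimately have "1 \<le> real (card (?E Q) + card (?E A) + card (?E B)) / real (card (kcnf_space k n m))"
    by simp
  then have "1 \<le> kcnf_prob k n m Q + kcnf_prob k n m A + kcnf_prob k n m B"
    unfolding kcnf_prob_def by (simp add: add_divide_distrib)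
  then show ?thesis
    by linarith
qed

section \<open>Expansion keeps the bad clauses few\<close>

definition clauses_vars :: "formula \<Rightarrow> nat set \<Rightarrow> nat set" where
  "clauses_vars F J = (\<Union>j\<in>J. clause_vars (F ! j))"

definition expanding :: "nat \<Rightarrow> formula \<Rightarrow> nat \<Rightarrow> bool" where
  "expanding k F T \<longleftrightarrow>
     (\<forall>J\<subseteq>{..<length F}. card J \<le> T \<longrightarrow> (k - 2) * card J \<le> card (clauses_vars F J))"

lemma finite_clause_vars [simp]: "finite (clause_vars c)"
  unfolding clause_vars_def by simp

lemma finite_clauses_vars [simp]: "finite J \<Longrightarrow> finite (clauses_vars F J)"
  unfolding clauses_vars_def by simp

lemma card_clause_vars_le: "card (clause_vars c) \<le> length c"
  unfolding clause_vars_def by (metis card_image_le card_length finite_set le_trans)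

lemma clauses_vars_Un: "clauses_vars F (A \<union> B) = clauses_vars F A \<union> clauses_vars F B"
  unfolding clauses_vars_def by blast

lemma kcnf_space_length: "F \<in> kcnf_space k n m \<Longrightarrow> length F = m"
  by (simp add: kcnf_space_iff_nth)

lemma kcnf_space_clause_length: "F \<in> kcnf_space k n m \<Longrightarrow> j < m \<Longrightarrow> length (F ! j) = k"
  by (simp add: kcnf_space_iff_nth)

lemma kcnf_space_clause_vars: "F \<in> kcnf_space k n m \<Longrightarrow> j < m \<Longrightarrow> clause_vars (F ! j) \<subseteq> {..<n}"
  by (force simp: kcnf_space_iff_nth clause_vars_def in_set_conv_nth)

lemma expanding_mono: "expanding k F T \<Longrightarrow> T' \<le> T \<Longrightarrow> expanding k F T'"
  unfolding expanding_def by auto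

lemma card_Un_clauses_vars_le:
  assumes "finite W" "finite D"
    and "\<And>j. j \<in> D \<Longrightarrow> length (F ! j) = k"
    and "\<And>j. j \<in> D \<Longrightarrow> 3 \<le> card (clause_vars (F ! j) \<inter> W)"
  shows "card (W \<union> clauses_vars F D) \<le> card W + (k - 3) * card D"
proof -
  have "W \<union> clauses_vars F D = W \<union> (\<Union>j\<in>D. clause_vars (F ! j) - W)"
    unfolding clauses_vars_def by blast
  then have "card (W \<union> clauses_vars F D) \<le> card W + card (\<Union>j\<in>D. clause_vars (F ! j) - W)"
    by (metis card_Un_le)
  also have "card (\<Union>j\<in>D. clause_vars (F ! j) - W) \<le> (\<Sum>j\<in>D. card (clause_vars (F ! j) - W))"
    by (rule card_UN_le[OF assms(2)])
  also have "\<dots> \<le> (\<Sum>j\<in>D. k - 3)"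
  proof (rule sum_mono)
    fix j
    assume "j \<in> D"
    then show "card (clause_vars (F ! j) - W) \<le> k - 3"
      using assms(3,4)[of j] card_clause_vars_le[of "F ! j"]
      by (simp add: card_Diff_subset_Int)
  qed
  finally show ?thesis
    by (simp add: mult.commute)
qed

lemma card_le_if_expanding:
  assumes expanding: "expanding k F (v + 1)" and "3 \<le> k" and "finite W"
    and "Jo \<subseteq> J" "J \<subseteq> {..<length F}"
    and "clauses_vars F Jo \<subseteq> W" "card W \<le> v + (k - 3) * card Jo" "card Jo \<le> v"
    and "\<And>j. j \<in> J \<Longrightarrow> length (F ! j) = k"
    and "\<And>j. j \<in> J \<Longrightarrow> 3 \<le> card (clause_vars (F ! j) \<inter> W)"
  shows "card J \<le> v"
proof (rule ccontr)
  assume "\<not> card J \<le> v"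
  have "finite J"
    using assms(5) by (rule finite_subset) simp
  then have "v + 1 - card Jo \<le> card (J - Jo)"
    using \<open>\<not> card J \<le> v\<close> assms(4) by (simp add: card_Diff_subset finite_subset)
  then obtain D where D: "D \<subseteq> J - Jo" "card D = v + 1 - card Jo"
    by (meson obtain_subset_with_card_n)
  have "finite D" "finite Jo"
    using D(1) assms(4) \<open>finite J\<close> finite_subset by blast+
  have card_JoD: "card (Jo \<union> D) = v + 1"
    using card_Un_disjoint[OF \<open>finite Jo\<close> \<open>finite D\<close>] D assms(8) by auto
  have "(k - 2) * (v + 1) \<le> card (clauses_vars F (Jo \<union> D))"
    using expanding D(1) assms(4,5) card_JoD unfolding expanding_def by (metis Un_subset_iff
        Diff_subset order_refl subset_trans)
  also have "\<dots> \<le> card (W \<union> clauses_vars F D)"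
    using assms(6) \<open>finite D\<close> \<open>finite W\<close> by (intro card_mono) (auto simp: clauses_vars_Un)
  also have "\<dots> \<le> card W + (k - 3) * card D"
    using D(1) assms(9,10) \<open>finite D\<close> \<open>finite W\<close> by (intro card_Un_clauses_vars_le) auto
  also have "\<dots> \<le> v + (k - 3) * (card Jo + card D)"
    using assms(7) by (simp add: add_mult_distrib2)
  also have "card Jo + card D = v + 1"
    using assms(8) D(2) by simp
  moreover have "k - 2 = Suc (k - 3)"
    using \<open>3 \<le> k\<close> by simp
  ultimately show False
    by simp
qed

lemma expanding_closure_step:
  assumes "expanding k F (v + 1)" "3 \<le> k" "finite W"
    and "Jo \<subseteq> J" "J \<subseteq> {..<length F}"
    and "clauses_vars F Jo \<subseteq> W" "card W \<le> v + (k - 3) * card Jo" "card Jo \<le> v"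
    and "\<And>j. j \<in> J \<Longrightarrow> length (F ! j) = k"
    and "\<And>j. j \<in> J \<Longrightarrow> 3 \<le> card (clause_vars (F ! j) \<inter> W)"
  shows "card J \<le> v \<and> card (W \<union> clauses_vars F J) \<le> v + (k - 3) * card J"
proof
  show "card J \<le> v"
    by (rule card_le_if_expanding[OF assms])
  have "finite J"
    using assms(5) by (rule finite_subset) simp
  then have "finite Jo"
    using assms(4) finite_subset by blast
  have "clauses_vars F J = clauses_vars F Jo \<union> clauses_vars F (J - Jo)"
    using assms(4) clauses_vars_Un[of F Jo "J - Jo"] by (simp add: Un_absorb1)
  then have "W \<union> clauses_vars F J = W \<union> clauses_vars F (J - Jo)"
    using assms(6) by blast
  also have "card \<dots> \<le> card W + (k - 3) * card (J - Jo)"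
    using assms(9,10) \<open>finite J\<close> \<open>finite W\<close> by (intro card_Un_clauses_vars_le) auto
  also have "\<dots> \<le> v + (k - 3) * (card Jo + card (J - Jo))"
    using assms(7) by (simp add: add_mult_distrib2)
  also have "card Jo + card (J - Jo) = card J"
    using card_mono[OF \<open>finite J\<close> assms(4)] \<open>finite Jo\<close> assms(4) by (simp add: card_Diff_subset)
  finally show "card (W \<union> clauses_vars F J) \<le> v + (k - 3) * card J" .
qed

lemma Vseq_Suc: "Vseq k n F (Suc i) = Vseq k n F i \<union> clauses_vars F (clauses_hitting F (Vseq k n F i))"
  by (simp add: clauses_vars_def)

declare Vseq.simps(2) [simp del]

lemma Vseq_mono: "i \<le> i' \<Longrightarrow> Vseq k n F i \<subseteq> Vseq k n F i'"
  by (rule lift_Suc_mono_le[of "Vseq k n F"]) (auto simp: Vseq_Suc)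

lemma clauses_hitting_subset: "clauses_hitting F V \<subseteq> {..<length F}"
  unfolding clauses_hitting_def by auto

lemma clauses_hittingD: "j \<in> clauses_hitting F V \<Longrightarrow> 3 \<le> card (clause_vars (F ! j) \<inter> V)"
  unfolding clauses_hitting_def by simp

lemma clauses_hitting_mono:
  assumes "V \<subseteq> V'"
  shows "clauses_hitting F V \<subseteq> clauses_hitting F V'"
proof
  fix j
  assume "j \<in> clauses_hitting F V"
  moreover have "card (clause_vars (F ! j) \<inter> V) \<le> card (clause_vars (F ! j) \<inter> V')"
    using assms by (intro card_mono) auto
  ultimately show "j \<in> clauses_hitting F V'"
    unfolding clauses_hitting_def by auto
qed

lemma Vseq_subset:
  assumes "F \<in> kcnf_space k n m"
  shows "Vseq k n F i \<subseteq> {..<n}"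
proof (induction i)
  case 0
  then show ?case
    by (auto simp: high_degree_vars_def)
next
  case (Suc i)
  have "clauses_vars F (clauses_hitting F (Vseq k n F i)) \<subseteq> {..<n}"
    using clauses_hitting_subset kcnf_space_clause_vars[OF assms] kcnf_space_length[OF assms]
    unfolding clauses_vars_def by blast
  then show ?case
    using Suc.IH unfolding Vseq_Suc by blast
qed

lemma Vseq_card_le:
  assumes F: "F \<in> kcnf_space k n m" and "3 \<le> k"
    and expanding: "expanding k F (card (Vseq k n F 0) + 1)"
  shows "card (clauses_hitting F (Vseq k n F i)) \<le> card (Vseq k n F 0) \<and>
    card (Vseq k n F (Suc i)) \<le> card (Vseq k n F 0) + (k - 3) * card (clauses_hitting F (Vseq k n F i))"
proof -
  have step: "card (clauses_hitting F (Vseq k n F i)) \<le> card (Vseq k n F 0) \<and>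
      card (Vseq k n F (Suc i)) \<le> card (Vseq k n F 0) + (k - 3) * card (clauses_hitting F (Vseq k n F i))"
    if "Jo \<subseteq> clauses_hitting F (Vseq k n F i)" "clauses_vars F Jo \<subseteq> Vseq k n F i"
      "card (Vseq k n F i) \<le> card (Vseq k n F 0) + (k - 3) * card Jo" "card Jo \<le> card (Vseq k n F 0)"
    for i Jo
    unfolding Vseq_Suc
  proof (rule expanding_closure_step[OF expanding \<open>3 \<le> k\<close> _ that(1) clauses_hitting_subset that(2-4)])
    show "finite (Vseq k n F i)"
      using Vseq_subset[OF F] by (rule finite_subset) simp
    show "length (F ! j) = k" if "j \<in> clauses_hitting F (Vseq k n F i)" for j
      using that clauses_hitting_subset kcnf_space_clause_length[OF F] kcnf_space_length[OF F] by blast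
  qed (rule clauses_hittingD)
  show ?thesis
  proof (induction i)
    case 0
    show ?case
      by (rule step[where Jo = "{}"]) (simp_all add: clauses_vars_def)
  next
    case (Suc i)
    show ?case
    proof (rule step[where Jo = "clauses_hitting F (Vseq k n F i)"])
      show "clauses_hitting F (Vseq k n F i) \<subseteq> clauses_hitting F (Vseq k n F (Suc i))"
        by (rule clauses_hitting_mono, rule Vseq_mono) simp
      show "clauses_vars F (clauses_hitting F (Vseq k n F i)) \<subseteq> Vseq k n F (Suc i)"
        unfolding Vseq_Suc by blast
    qed (use Suc.IH in blast)+
  qed
qed

lemma V_bad_eq_Vseq:
  assumes "F \<in> kcnf_space k n m"
  obtains i where "V_bad k n F = Vseq k n F i"
proof -
  have "V_bad k n F \<subseteq> {..<n}"
    using Vseq_subset[OF assms] unfolding V_bad_def by blast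
  then have "finite (V_bad k n F)"
    by (rule finite_subset) simp
  have "Vseq k n F i \<subseteq> Vseq k n F j \<or> Vseq k n F j \<subseteq> Vseq k n F i" for i j
    using Vseq_mono nat_le_linear by metis
  then have "subset.chain UNIV (range (Vseq k n F))"
    unfolding subset.chain_def by auto
  moreover have "V_bad k n F \<subseteq> \<Union> (range (Vseq k n F))" "range (Vseq k n F) \<noteq> {}"
    unfolding V_bad_def by simp_all
  ultimately obtain B where "B \<in> range (Vseq k n F)" "V_bad k n F \<subseteq> B"
    using finite_subset_Union_chain[OF \<open>finite (V_bad k n F)\<close>] by metis
  then obtain i where "V_bad k n F \<subseteq> Vseq k n F i"
    by blast
  moreover have "Vseq k n F i \<subseteq> V_bad k n F"
    unfolding V_bad_def by blast
  ultimately show ?thesis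
    using that by blast
qed

lemma card_C_bad_le:
  assumes "F \<in> kcnf_space k n m" "3 \<le> k"
    and "expanding k F (card (high_degree_vars k n F) + 1)"
  shows "card (C_bad k n F) \<le> card (high_degree_vars k n F)"
proof -
  obtain i where "V_bad k n F = Vseq k n F i"
    using V_bad_eq_Vseq[OF assms(1)] .
  then show ?thesis
    using Vseq_card_le[OF assms(1,2), of i] assms(3) unfolding C_bad_def by simp
qed

section \<open>Double counting\<close>

definition occurrences :: "nat \<Rightarrow> clause \<Rightarrow> nat" where
  "occurrences x c = length (filter (\<lambda>l. fst l = x) c)"

lemma degree_eq_sum_occurrences:
  "degree F x = (\<Sum>j<length F. occurrences x (F ! j))"
  unfolding degree_def occurrences_def by (simp add: sum_list_sum_nth atLeast0LessThan)

lemma card_clause_vars_Int_le: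
  assumes "finite V"
  shows "card (clause_vars c \<inter> V) \<le> (\<Sum>x\<in>V. occurrences x c)"
proof -
  have "card (clause_vars c \<inter> V) = (\<Sum>x\<in>clause_vars c \<inter> V. 1)"
    by simp
  also have "\<dots> \<le> (\<Sum>x\<in>clause_vars c \<inter> V. occurrences x c)"
    by (intro sum_mono) (auto simp: occurrences_def clause_vars_def Suc_le_eq filter_empty_conv)
  also have "\<dots> \<le> (\<Sum>x\<in>V. occurrences x c)"
    using assms by (intro sum_mono2) auto
  finally show ?thesis .
qed

lemma good_var_degree_less:
  assumes "x \<in> good_vars k n F"
  shows "degree F x < Delta k"
proof -
  have "high_degree_vars k n F \<subseteq> V_bad k n F"
    unfolding V_bad_def by (metis UNIV_I UN_upper Vseq.simps(1))
  then show ?thesis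
    using assms unfolding good_vars_def high_degree_vars_def by auto
qed

lemma sum_card_clause_vars_Int_le:
  assumes "F \<in> kcnf_space k n m" "V \<subseteq> good_vars k n F"
  shows "(\<Sum>j\<in>good_clauses k n F. card (clause_vars (F ! j) \<inter> V)) \<le> card V * Delta k"
proof -
  have "finite V"
    using assms(2) unfolding good_vars_def by (rule finite_subset) simp
  have "(\<Sum>j\<in>good_clauses k n F. card (clause_vars (F ! j) \<inter> V))
      \<le> (\<Sum>j<length F. card (clause_vars (F ! j) \<inter> V))"
    by (intro sum_mono2) (auto simp: good_clauses_def)
  also have "\<dots> \<le> (\<Sum>j<length F. \<Sum>x\<in>V. occurrences x (F ! j))"
    by (intro sum_mono card_clause_vars_Int_le[OF \<open>finite V\<close>])
  also have "\<dots> = (\<Sum>x\<in>V. degree F x)"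
    by (simp add: degree_eq_sum_occurrences sum.swap[of _ V])
  also have "\<dots> \<le> (\<Sum>x\<in>V. Delta k)"
    using assms(2) by (intro sum_mono less_imp_le[OF good_var_degree_less]) blast
  finally show ?thesis
    by simp
qed

lemma r0_distributed_card_mult_Delta_ge:
  assumes F: "F \<in> kcnf_space k n m" and "3 \<le> k"
    and "expanding k F (card (high_degree_vars k n F) + 1)"
    and V: "r0_distributed k n F V"
  shows "(real m - real (card (high_degree_vars k n F))) * (r0 * (real k - 3))
    \<le> real (card V) * real (Delta k)"
proof -
  let ?G = "good_clauses k n F"
  have V_good: "V \<subseteq> good_vars k n F"
    and V_meets: "\<And>j. j \<in> ?G \<Longrightarrow> r0 * (real k - 3) \<le> real (card (clause_vars (F ! j) \<inter> V))"
    using V unfolding r0_distributed_def by auto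
  have "C_bad k n F \<subseteq> {..<m}"
    using clauses_hitting_subset kcnf_space_length[OF F] unfolding C_bad_def by blast
  then have "card ?G = m - card (C_bad k n F)" "card (C_bad k n F) \<le> m"
    using kcnf_space_length[OF F] card_mono[OF finite_lessThan, of "C_bad k n F" m]
    unfolding good_clauses_def atLeast0LessThan
    by (simp_all add: card_Diff_subset finite_subset)
  then have "real m - real (card (high_degree_vars k n F)) \<le> real (card ?G)"
    using card_C_bad_le[OF assms(1-3)] by linarith
  then have "(real m - real (card (high_degree_vars k n F))) * (r0 * (real k - 3))
      \<le> (\<Sum>j\<in>?G. r0 * (real k - 3))"
    using \<open>3 \<le> k\<close> by (simp add: r0_def mult_right_mono)
  also have "\<dots> \<le> (\<Sum>j\<in>?G. real (card (clause_vars (F ! j) \<inter> V)))"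
    by (intro sum_mono V_meets)
  also have "\<dots> = real (\<Sum>j\<in>?G. card (clause_vars (F ! j) \<inter> V))"
    by simp
  also have "\<dots> \<le> real (card V * Delta k)"
    using sum_card_clause_vars_Int_le[OF F V_good] by (simp only: of_nat_le_iff)
  finally show ?thesis
    by simp
qed

section \<open>First-moment bounds\<close>

definition occurrence_positions :: "nat \<Rightarrow> nat \<Rightarrow> formula \<Rightarrow> nat \<Rightarrow> (nat \<times> nat) set" where
  "occurrence_positions m k F x = {(j, i) \<in> {..<m} \<times> {..<k}. fst (F ! j ! i) = x}"

lemma finite_occurrence_positions [simp]: "finite (occurrence_positions m k F x)"
  unfolding occurrence_positions_def by (rule finite_subset[of _ "{..<m} \<times> {..<k}"]) auto

lemma card_occurrence_positions:
  assumes F: "F \<in> kcnf_space k n m"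
  shows "card (occurrence_positions m k F x) = degree F x"
proof -
  have "occurrence_positions m k F x = (SIGMA j:{..<m}. {i. i < k \<and> fst (F ! j ! i) = x})"
    unfolding occurrence_positions_def by auto
  then have "card (occurrence_positions m k F x) = (\<Sum>j<m. card {i. i < k \<and> fst (F ! j ! i) = x})"
    by simp
  also have "\<dots> = (\<Sum>j<m. occurrences x (F ! j))"
    using kcnf_space_clause_length[OF F]
    by (intro sum.cong refl) (simp add: occurrences_def length_filter_conv_card)
  also have "\<dots> = degree F x"
    by (simp add: degree_eq_sum_occurrences kcnf_space_length[OF F])
  finally show ?thesis .
qed

text \<open>\<open>s\<close> high-degree variables occupy at least \<open>\<Delta> s\<close> literal positions.\<close>

lemma many_high_degree_vars_witness:
  assumes F: "F \<in> kcnf_space k n m" and "s \<le> card (high_degree_vars k n F)"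
  shows "\<exists>S\<in>{S. S \<subseteq> {..<n} \<and> card S = s}. \<exists>P\<in>{P. P \<subseteq> {..<m} \<times> {..<k} \<and> card P = Delta k * s}.
    vars_at_in P S F"
proof -
  obtain S where S: "S \<subseteq> high_degree_vars k n F" "card S = s"
    using obtain_subset_with_card_n[OF assms(2)] by metis
  have "finite S"
    using S(1) unfolding high_degree_vars_def by (rule finite_subset) simp
  let ?Pos = "\<Union>x\<in>S. occurrence_positions m k F x"
  have "Delta k * s = (\<Sum>x\<in>S. Delta k)"
    using S(2) by simp
  also have "\<dots> \<le> (\<Sum>x\<in>S. card (occurrence_positions m k F x))"
    using S(1) by (intro sum_mono) (auto simp: card_occurrence_positions[OF F] high_degree_vars_def)
  also have "\<dots> = card ?Pos"
    using \<open>finite S\<close> by (intro card_UN_disjoint[symmetric]) (simp_all, auto simp: occurrence_positions_def)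
  finally obtain P where P: "P \<subseteq> ?Pos" "card P = Delta k * s"
    by (meson obtain_subset_with_card_n)
  have "S \<subseteq> {..<n}" "P \<subseteq> {..<m} \<times> {..<k}" "vars_at_in P S F"
    using S(1) P(1) by (auto simp: high_degree_vars_def occurrence_positions_def vars_at_in_def)
  then show ?thesis
    using S(2) P(2) by blast
qed

lemma kcnf_prob_many_high_degree_le_binomial:
  assumes "0 < n"
  shows "kcnf_prob k n m (\<lambda>F. s \<le> card (high_degree_vars k n F))
    \<le> real (n choose s) * real ((m * k) choose (Delta k * s)) * (real s / real n) ^ (Delta k * s)"
proof -
  let ?SS = "{S. S \<subseteq> {..<n} \<and> card S = s}"
  let ?PP = "{P. P \<subseteq> {..<m} \<times> {..<k} \<and> card P = Delta k * s}"
  have "finite ?SS" "finite ?PP"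
    by (auto intro: finite_subset[of _ "Pow {..<n}"] finite_subset[of _ "Pow ({..<m} \<times> {..<k})"])
  have "kcnf_prob k n m (\<lambda>F. s \<le> card (high_degree_vars k n F))
      \<le> kcnf_prob k n m (\<lambda>F. \<exists>S\<in>?SS. \<exists>P\<in>?PP. vars_at_in P S F)"
    by (intro kcnf_prob_mono many_high_degree_vars_witness)
  also have "\<dots> \<le> (\<Sum>S\<in>?SS. kcnf_prob k n m (\<lambda>F. \<exists>P\<in>?PP. vars_at_in P S F))"
    by (rule kcnf_prob_Bex_le[OF \<open>finite ?SS\<close>])
  also have "\<dots> \<le> (\<Sum>S\<in>?SS. \<Sum>P\<in>?PP. kcnf_prob k n m (vars_at_in P S))"
    by (intro sum_mono kcnf_prob_Bex_le[OF \<open>finite ?PP\<close>])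
  also have "\<dots> = (\<Sum>S\<in>?SS. \<Sum>P\<in>?PP. (real s / real n) ^ (Delta k * s))"
    using assms by (intro sum.cong refl) (simp add: kcnf_prob_vars_at_in)
  also have "\<dots> = real (n choose s) * real ((m * k) choose (Delta k * s)) * (real s / real n) ^ (Delta k * s)"
    using n_subsets[of "{..<n}" s] n_subsets[of "{..<m} \<times> {..<k}" "Delta k * s"]
    by (simp add: card_cartesian_product)
  finally show ?thesis .
qed

text \<open>A set \<open>J\<close> of \<open>t\<close> clauses with fewer than \<open>(k - 2) t\<close> variables has all its \<open>t k\<close>
  literals inside some set of exactly \<open>(k - 2) t\<close> variables.\<close>

lemma not_expanding_witness:
  assumes F: "F \<in> kcnf_space k n m" and "\<not> expanding k F T" and "(k - 2) * T \<le> n"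
  shows "\<exists>t\<in>{1..T}. \<exists>J\<in>{J. J \<subseteq> {..<m} \<and> card J = t}. \<exists>S\<in>{S. S \<subseteq> {..<n} \<and> card S = (k - 2) * t}.
    vars_at_in (J \<times> {..<k}) S F"
proof -
  obtain J where J: "J \<subseteq> {..<m}" "card J \<le> T" "card (clauses_vars F J) < (k - 2) * card J"
    using assms(2) kcnf_space_length[OF F] unfolding expanding_def by auto
  have "1 \<le> card J"
    using J(3) by (cases "card J") auto
  have vars_J: "clauses_vars F J \<subseteq> {..<n}"
    using J(1) kcnf_space_clause_vars[OF F] unfolding clauses_vars_def by blast
  have "(k - 2) * card J \<le> card {..<n}"
    using J(2) assms(3) by (simp add: le_trans[OF mult_le_mono2])
  then obtain S where S: "clauses_vars F J \<subseteq> S" "S \<subseteq> {..<n}" "card S = (k - 2) * card J"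
    using exists_subset_between[OF _ _ vars_J] J(3) by (metis finite_lessThan less_imp_le)
  have "vars_at_in (J \<times> {..<k}) S F"
    unfolding vars_at_in_def
  proof (clarify)
    fix j i
    assume "j \<in> J" "i < k"
    then have "fst (F ! j ! i) \<in> clause_vars (F ! j)"
      using J(1) kcnf_space_clause_length[OF F] by (force simp: clause_vars_def)
    then show "fst (F ! j ! i) \<in> S"
      using \<open>j \<in> J\<close> S(1) unfolding clauses_vars_def by blast
  qed
  then show ?thesis
    using \<open>1 \<le> card J\<close> J(1,2) S(2,3) by (intro bexI[of _ "card J"] bexI[of _ J] bexI[of _ S]) auto
qed

lemma kcnf_prob_not_expanding_le_binomial_sum:
  assumes "0 < n" and "(k - 2) * T \<le> n"
  shows "kcnf_prob k n m (\<lambda>F. \<not> expanding k F T)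
    \<le> (\<Sum>t=1..T. real (m choose t) * real (n choose ((k - 2) * t)) * (real ((k - 2) * t) / real n) ^ (t * k))"
proof -
  let ?JJ = "\<lambda>t. {J. J \<subseteq> {..<m} \<and> card J = t}"
  let ?SS = "\<lambda>t. {S. S \<subseteq> {..<n} \<and> card S = (k - 2) * t}"
  have "finite (?JJ t)" "finite (?SS t)" for t
    by (auto intro: finite_subset[of _ "Pow {..<m}"] finite_subset[of _ "Pow {..<n}"])
  have "kcnf_prob k n m (\<lambda>F. \<not> expanding k F T)
     \<le> kcnf_prob k n m (\<lambda>F. \<exists>t\<in>{1..T}. \<exists>J\<in>?JJ t. \<exists>S\<in>?SS t. vars_at_in (J \<times> {..<k}) S F)"
    using assms(2) by (intro kcnf_prob_mono not_expanding_witness)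
  also have "\<dots> \<le> (\<Sum>t=1..T. kcnf_prob k n m (\<lambda>F. \<exists>J\<in>?JJ t. \<exists>S\<in>?SS t. vars_at_in (J \<times> {..<k}) S F))"
    by (rule kcnf_prob_Bex_le) simp
  also have "\<dots> \<le> (\<Sum>t=1..T. \<Sum>J\<in>?JJ t. kcnf_prob k n m (\<lambda>F. \<exists>S\<in>?SS t. vars_at_in (J \<times> {..<k}) S F))"
    by (intro sum_mono kcnf_prob_Bex_le \<open>finite (?JJ _)\<close>)
  also have "\<dots> \<le> (\<Sum>t=1..T. \<Sum>J\<in>?JJ t. \<Sum>S\<in>?SS t. kcnf_prob k n m (vars_at_in (J \<times> {..<k}) S))"
    by (intro sum_mono kcnf_prob_Bex_le \<open>finite (?SS _)\<close>)
  also have "\<dots> = (\<Sum>t=1..T. \<Sum>J\<in>?JJ t. \<Sum>S\<in>?SS t. (real ((k - 2) * t) / real n) ^ (t * k))"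
  proof (intro sum.cong refl)
    fix t J S
    assume J: "J \<in> ?JJ t" and S: "S \<in> ?SS t"
    then have "J \<times> {..<k} \<subseteq> {..<m} \<times> {..<k}" "finite J"
      by (auto intro: finite_subset[OF _ finite_lessThan])
    then show "kcnf_prob k n m (vars_at_in (J \<times> {..<k}) S) = (real ((k - 2) * t) / real n) ^ (t * k)"
      using J S assms(1) by (simp add: kcnf_prob_vars_at_in card_cartesian_product)
  qed
  also have "\<dots> = (\<Sum>t=1..T. real (m choose t) * real (n choose ((k - 2) * t))
      * (real ((k - 2) * t) / real n) ^ (t * k))"
    by (simp add: n_subsets mult.assoc)
  finally show ?thesis .
qed

section \<open>Numerical estimates for large \<open>k\<close>\<close>

text \<open>W.h.p. fewer than \<open>hd_rate k \<alpha> \<cdot> n\<close> variables have degree at least \<open>\<Delta>\<close>; a set of \<open>t\<close>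
  clauses spans fewer than \<open>(k - 2) t\<close> variables with probability at most
  \<open>(expansion_rate k \<alpha> \<cdot> t / n)\<^sup>t\<close>; and \<open>slack k\<close> is the fraction of clauses that may be
  bad, as \<open>r0 (k - 3) (1 - slack k) = (r0 - delta) k\<close>.\<close>

definition hd_rate :: "nat \<Rightarrow> real \<Rightarrow> real" where
  "hd_rate k \<alpha> = 2 * exp 1 * (exp 1 * (real k * \<alpha> / real (Delta k))) ^ Delta k"

definition expansion_rate :: "nat \<Rightarrow> real \<Rightarrow> real" where
  "expansion_rate k \<alpha> = exp 1 ^ (k - 1) * \<alpha> * real (k - 2) ^ 2"

definition slack :: "nat \<Rightarrow> real" where
  "slack k = 1 - (r0 - delta) * real k / (r0 * (real k - 3))"

lemma expansion_term_le:
  fixes \<alpha> :: real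
  assumes "3 \<le> k" "1 \<le> t" "0 < n" "real m \<le> \<alpha> * real n"
  shows "real (m choose t) * real (n choose ((k - 2) * t)) * (real ((k - 2) * t) / real n) ^ (t * k)
    \<le> (expansion_rate k \<alpha> * real t / real n) ^ t"
proof -
  have "0 \<le> \<alpha> * real n"
    using assms(4) of_nat_0_le_iff[of m] by linarith
  then have "0 \<le> \<alpha>"
    using assms(3) by (simp add: zero_le_mult_iff)
  define s where "s = (k - 2) * t"
  have "t * k = s + 2 * t"
    using assms(1) by (simp add: s_def algebra_simps)
  have "real (m choose t) \<le> (exp 1 * real m / real t) ^ t"
    by (rule binomial_le_exp_mult_div_power)
  also have "\<dots> \<le> (exp 1 * (\<alpha> * real n) / real t) ^ t"
    using assms(4) by (intro power_mono divide_right_mono mult_left_mono) simp_all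
  finally have A: "real (m choose t) \<le> (exp 1 * \<alpha> * real n / real t) ^ t"
    by (simp add: ac_simps)
  have B: "real (n choose s) * (real s / real n) ^ s \<le> (exp 1 ^ (k - 2)) ^ t"
    using binomial_mult_ratio_power_le[OF assms(3), of s] by (simp add: s_def power_mult)
  have "real (m choose t) * real (n choose s) * (real s / real n) ^ (t * k)
      = real (m choose t) * (real (n choose s) * (real s / real n) ^ s) * ((real s / real n) ^ 2) ^ t"
    unfolding \<open>t * k = s + 2 * t\<close> power_add power_mult by (simp only: ac_simps)
  also have "\<dots> \<le> (exp 1 * \<alpha> * real n / real t) ^ t * (exp 1 ^ (k - 2)) ^ t * ((real s / real n) ^ 2) ^ t"
    using \<open>0 \<le> \<alpha>\<close> by (intro mult_right_mono[OF mult_mono[OF A B]]) simp_all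
  also have "\<dots> = (exp 1 * \<alpha> * real n / real t * exp 1 ^ (k - 2) * (real s / real n) ^ 2) ^ t"
    by (simp only: power_mult_distrib)
  also have "exp 1 * \<alpha> * real n / real t * exp 1 ^ (k - 2) * (real s / real n) ^ 2
      = exp 1 ^ (k - 1) * \<alpha> * real (k - 2) ^ 2 * real t / real n"
  proof -
    have "k - 1 = Suc (k - 2)"
      using assms(1) by simp
    then have "exp 1 ^ (k - 1) = exp (1::real) * exp 1 ^ (k - 2)"
      by (simp only: power_Suc)
    then show ?thesis
      using assms(2,3) by (simp add: s_def field_simps power2_eq_square)
  qed
  finally show ?thesis
    by (simp only: s_def expansion_rate_def)
qed

lemma two_powr_le_Delta: "2 powr ((r0 - 2 * delta) * real k) \<le> real (Delta k)"
proof -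
  have "0 < 2 powr ((r0 - 2 * delta) * real k)"
    by simp
  then show ?thesis
    unfolding Delta_def by (simp add: le_of_int_ceiling)
qed

lemma Delta_pos: "0 < Delta k"
proof -
  have "0 < 2 powr ((r0 - 2 * delta) * real k)"
    by simp
  then show ?thesis
    using two_powr_le_Delta[of k] by linarith
qed

lemma hd_rate_pos: "0 < \<alpha> \<Longrightarrow> 0 < k \<Longrightarrow> 0 < hd_rate k \<alpha>"
  using Delta_pos[of k] by (simp add: hd_rate_def)

lemma k_le_Delta:
  assumes "1000000 \<le> k"
  shows "real k \<le> real (Delta k)"
proof -
  define z :: real where "z = 0.117821 * real k / 2"
  have "real k \<le> z * z"
  proof -
    have "1 \<le> (0.117821 / 2) ^ 2 * (real k :: real)"
      using assms by (simp add: power2_eq_square)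
    then show ?thesis
      unfolding z_def by (simp add: power2_eq_square mult_le_cancel_right1)
  qed
  also have "\<dots> < 2 powr z * 2 powr z"
    using less_two_powr[of z] by (intro mult_strict_mono) (simp_all add: z_def)
  also have "\<dots> = 2 powr ((r0 - 2 * delta) * real k)"
    by (simp add: z_def r0_def delta_def flip: powr_add)
  also have "\<dots> \<le> real (Delta k)"
    by (rule two_powr_le_Delta)
  finally show ?thesis
    by simp
qed

lemma mean_degree_div_Delta_le:
  assumes "0 < k" "\<alpha> \<le> alpha0 k"
  shows "real k * \<alpha> / real (Delta k) \<le> 1 / real k ^ 2"
proof -
  define P where "P = 2 powr ((r0 - 2 * delta) * real k)"
  have "0 < P" "P \<le> real (Delta k)"
    using two_powr_le_Delta[of k] by (simp_all add: P_def)
  have "real k * \<alpha> / real (Delta k) \<le> real k * (P / real k ^ 3) / real (Delta k)"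
    using assms \<open>0 < P\<close> \<open>P \<le> real (Delta k)\<close> unfolding alpha0_def P_def[symmetric]
    by (intro divide_right_mono mult_left_mono) simp_all
  also have "\<dots> = P / real (Delta k) / real k ^ 2"
    using assms(1) by (simp add: power2_eq_square power3_eq_cube)
  also have "\<dots> \<le> 1 / real k ^ 2"
    using \<open>0 < P\<close> \<open>P \<le> real (Delta k)\<close> by (intro divide_right_mono) simp_all
  finally show ?thesis .
qed

lemma slack_ge:
  assumes "1000000 \<le> k"
  shows "54 / real k \<le> slack k"
proof -
  have k: "1000000 \<le> real k"
    using assms by simp
  have "57 * r0 * real k \<le> delta * real k * real k"
    using mult_right_mono[of "57 * r0" "delta * real k" "real k"] k by (simp add: r0_def delta_def)
  then have "(r0 - delta) * real k * real k \<le> (real k - 54) * (r0 * (real k - 3))"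
    unfolding r0_def delta_def by (simp add: algebra_simps)
  then have "(r0 - delta) * real k / (r0 * (real k - 3)) \<le> (real k - 54) / real k"
    using k by (simp add: r0_def field_simps)
  then show ?thesis
    using k unfolding slack_def by (simp add: field_simps)
qed

lemma slack_pos:
  assumes "1000000 \<le> k"
  shows "0 < slack k"
proof -
  have "0 < 54 / real k"
    using assms by simp
  then show ?thesis
    using slack_ge[OF assms] by linarith
qed

lemma slack_mult_eq:
  assumes "4 \<le> k"
  shows "r0 * (real k - 3) * (1 - slack k) = (r0 - delta) * real k"
proof -
  have "1 - slack k = (r0 - delta) * real k / (r0 * (real k - 3))"
    by (simp add: slack_def)
  moreover have "r0 * (real k - 3) \<noteq> 0"
    using assms by (simp add: r0_def)
  ultimately show ?thesis
    by (simp only: times_divide_eq_right nonzero_mult_div_cancel_left not_False_eq_True)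
qed

lemma hd_rate_le:
  assumes "1000000 \<le> k" "0 < \<alpha>" "\<alpha> \<le> alpha0 k"
  shows "hd_rate k \<alpha> \<le> 54 * (real k * \<alpha> / real (Delta k)) ^ 2"
proof -
  define A where "A = real k * \<alpha> / real (Delta k)"
  have "real k \<le> real (Delta k)"
    by (rule k_le_Delta[OF assms(1)])
  then have "2 \<le> Delta k" "0 < A"
    using assms(1,2) by (simp_all add: A_def)
  have "exp 1 * A \<le> 3 * (1 / real k ^ 2)"
    using exp_le mean_degree_div_Delta_le[of k \<alpha>] assms \<open>0 < A\<close> by (intro mult_mono) (simp_all add: A_def)
  also have "\<dots> \<le> 1"
  proof -
    have "(3::real) \<le> 1000000 * 1000000"
      by simp
    also have "\<dots> \<le> real k * real k"
      using assms(1) by (intro mult_mono) simp_all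
    finally show ?thesis
      by (simp add: field_simps power2_eq_square)
  qed
  finally have "(exp 1 * A) ^ Delta k \<le> (exp 1 * A) ^ 2"
    using \<open>2 \<le> Delta k\<close> \<open>0 < A\<close> by (intro power_decreasing) simp_all
  then have "hd_rate k \<alpha> \<le> 2 * exp 1 * (exp 1 * A) ^ 2"
    unfolding hd_rate_def A_def[symmetric] by simp
  also have "\<dots> = 2 * exp 1 ^ 3 * A ^ 2"
    by (simp add: power2_eq_square power3_eq_cube mult_ac)
  also have "\<dots> \<le> 2 * 3 ^ 3 * A ^ 2"
  proof -
    have "exp (1::real) ^ 3 \<le> 3 ^ 3"
      using exp_le by (rule power_mono) simp
    then show ?thesis
      using mult_right_mono[of "exp 1 ^ 3" "3 ^ 3" "A ^ 2"] by (simp add: mult_ac)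
  qed
  finally show ?thesis
    by (simp add: A_def)
qed

lemma hd_rate_le_inverse:
  assumes "1000000 \<le> k" "0 < \<alpha>" "\<alpha> \<le> alpha0 k"
  shows "hd_rate k \<alpha> \<le> 1 / (2 * real k)"
proof -
  have "(real k * \<alpha> / real (Delta k)) ^ 2 \<le> (1 / real k ^ 2) ^ 2"
    using mean_degree_div_Delta_le[of k \<alpha>] assms by (intro power_mono) simp_all
  then have "hd_rate k \<alpha> \<le> 54 * (1 / real k ^ 2) ^ 2"
    using hd_rate_le[OF assms] by linarith
  also have "\<dots> \<le> 1 / (2 * real k)"
  proof -
    have "(1000000::real) ^ 3 \<le> real k ^ 3"
      using assms(1) by (intro power_mono) simp_all
    then show ?thesis
      using assms(1) by (simp add: field_simps power2_eq_square power3_eq_cube)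
  qed
  finally show ?thesis .
qed

lemma hd_rate_le_slack:
  assumes "1000000 \<le> k" "0 < \<alpha>" "\<alpha> \<le> alpha0 k"
  shows "hd_rate k \<alpha> \<le> \<alpha> * slack k / 2"
proof -
  define A where "A = real k * \<alpha> / real (Delta k)"
  have "real k \<le> real (Delta k)"
    by (rule k_le_Delta[OF assms(1)])
  then have "0 < A" "A \<le> \<alpha>"
    using assms(1,2) by (simp_all add: A_def field_simps)
  have "hd_rate k \<alpha> \<le> 54 * A * A"
    using hd_rate_le[OF assms] by (simp add: A_def power2_eq_square)
  also have "\<dots> \<le> 54 * \<alpha> * (1 / real k ^ 2)"
    using mean_degree_div_Delta_le[of k \<alpha>] assms \<open>0 < A\<close> \<open>A \<le> \<alpha>\<close>
    by (intro mult_mono) (simp_all add: A_def)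
  also have "\<dots> \<le> \<alpha> * (54 / real k) / 2"
    using assms(1,2) by (simp add: field_simps power2_eq_square)
  also have "\<dots> \<le> \<alpha> * slack k / 2"
    using assms(2) by (intro divide_right_mono mult_left_mono slack_ge[OF assms(1)]) simp_all
  finally show ?thesis .
qed

lemma hd_rate_mult_expansion_rate_le:
  assumes "1000000 \<le> k" "0 < \<alpha>" "\<alpha> \<le> alpha0 k"
  shows "hd_rate k \<alpha> * expansion_rate k \<alpha> \<le> 1 / 4"
proof -
  define D where "D = real (Delta k)"
  have k: "1000000 \<le> real k" "real k \<le> D"
    using assms(1) k_le_Delta[OF assms(1)] by (simp_all add: D_def)
  have A: "real k * \<alpha> / D \<le> 1 / real k ^ 2"
    using mean_degree_div_Delta_le[of k \<alpha>] assms by (simp add: D_def)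
  have "exp 1 * (real k * \<alpha> / D) \<le> 3 * (1 / real k ^ 2)"
    using exp_le A assms(2) k by (intro mult_mono) simp_all
  also have "\<dots> \<le> 1 / real k"
    using k by (simp add: field_simps power2_eq_square)
  finally have "(exp 1 * (real k * \<alpha> / D)) ^ Delta k \<le> (1 / real k) ^ Delta k"
    using assms(2) k by (intro power_mono) simp_all
  moreover have "0 \<le> (exp 1 * (real k * \<alpha> / D)) ^ Delta k"
    using assms(2) k by simp
  ultimately have hd: "hd_rate k \<alpha> \<le> 6 * (1 / real k) ^ Delta k"
    unfolding hd_rate_def D_def[symmetric] using exp_le
      mult_mono[of "2 * exp 1" 6 "(exp 1 * (real k * \<alpha> / D)) ^ Delta k" "(1 / real k) ^ Delta k"]
    by simp
  have "\<alpha> \<le> D / real k ^ 3"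
    using A k by (simp add: field_simps power2_eq_square power3_eq_cube)
  then have "expansion_rate k \<alpha> \<le> 3 ^ (k - 1) * (D / real k ^ 3) * real k ^ 2"
    unfolding expansion_rate_def using exp_le assms(2) k
    by (intro mult_mono power_mono) simp_all
  also have "\<dots> = 3 ^ (k - 1) * D / real k"
    using k by (simp add: power2_eq_square power3_eq_cube)
  finally have c: "expansion_rate k \<alpha> \<le> 3 ^ (k - 1) * D / real k" .
  have "hd_rate k \<alpha> * expansion_rate k \<alpha> \<le> 6 * (1 / real k) ^ Delta k * (3 ^ (k - 1) * D / real k)"
    using hd c assms(2) by (intro mult_mono) (simp_all add: expansion_rate_def)
  also have "\<dots> = 2 * 3 ^ k * D / real k ^ (Delta k + 1)"
  proof -
    have "(3::real) ^ k = 3 * 3 ^ (k - 1)"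
      using assms(1) by (simp flip: power_Suc)
    then show ?thesis
      using k by (simp add: field_simps)
  qed
  also have "\<dots> \<le> 1 / 4"
  proof -
    have "8 * 3 ^ k * Delta k \<le> k ^ (Delta k + 1)"
      using assms(1) k_le_Delta[OF assms(1)] by (intro three_power_mult_le_power) simp_all
    then have "8 * 3 ^ k * D \<le> real k ^ (Delta k + 1)"
      using of_nat_le_iff[of "8 * 3 ^ k * Delta k" "k ^ (Delta k + 1)", where 'a = real]
      unfolding D_def by simp
    then show ?thesis
      using k by (simp add: field_simps)
  qed
  finally show ?thesis .
qed

lemma high_degree_term_le:
  fixes \<alpha> :: real
  assumes "0 < n" "0 < s" "0 < \<alpha>" "0 < k" "real m \<le> \<alpha> * real n"
    and "hd_rate k \<alpha> * real n \<le> real s"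
  shows "real (n choose s) * real ((m * k) choose (Delta k * s)) * (real s / real n) ^ (Delta k * s)
    \<le> (1 / 2) ^ s"
proof -
  define A where "A = real k * \<alpha> / real (Delta k)"
  have "0 < A"
    using assms(3,4) Delta_pos[of k] by (simp add: A_def)
  have "0 < hd_rate k \<alpha>"
    using assms(3,4) by (rule hd_rate_pos)
  have "real (n choose s) \<le> (exp 1 * real n / real s) ^ s"
    by (rule binomial_le_exp_mult_div_power)
  also have "\<dots> \<le> (exp 1 / hd_rate k \<alpha>) ^ s"
    using assms(1,2,6) \<open>0 < hd_rate k \<alpha>\<close> by (intro power_mono) (simp_all add: field_simps)
  finally have binomial_vars: "real (n choose s) \<le> (exp 1 / hd_rate k \<alpha>) ^ s" .
  have "real ((m * k) choose (Delta k * s)) * (real s / real n) ^ (Delta k * s)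
      \<le> (exp 1 * real (m * k) / real (Delta k * s)) ^ (Delta k * s) * (real s / real n) ^ (Delta k * s)"
    by (intro mult_right_mono binomial_le_exp_mult_div_power) simp
  also have "\<dots> = (exp 1 * real k * real m / (real (Delta k) * real n)) ^ (Delta k * s)"
  proof -
    have "exp 1 * real (m * k) / real (Delta k * s) * (real s / real n)
        = exp 1 * real k * real m / (real (Delta k) * real n)"
      using assms(2) by (simp add: field_simps)
    then show ?thesis
      by (simp only: power_mult_distrib[symmetric])
  qed
  also have "\<dots> \<le> (exp 1 * A) ^ (Delta k * s)"
    using assms(1,4,5) Delta_pos[of k] unfolding A_def by (intro power_mono) (simp_all add: field_simps)
  finally have binomial_positions: "real ((m * k) choose (Delta k * s)) * (real s / real n) ^ (Delta k * s)
      \<le> ((exp 1 * A) ^ Delta k) ^ s"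
    by (simp add: power_mult)
  have "real (n choose s) * real ((m * k) choose (Delta k * s)) * (real s / real n) ^ (Delta k * s)
      \<le> (exp 1 / hd_rate k \<alpha>) ^ s * ((exp 1 * A) ^ Delta k) ^ s"
    unfolding mult.assoc using binomial_vars binomial_positions by (intro mult_mono) simp_all
  also have "\<dots> = (1 / 2) ^ s"
    unfolding hd_rate_def A_def[symmetric] using \<open>0 < A\<close> by (simp flip: power_mult_distrib)
  finally show ?thesis .
qed

lemma kcnf_prob_many_high_degree_le:
  fixes \<alpha> :: real
  assumes "0 < n" "0 < \<alpha>" "0 < k" "real m \<le> \<alpha> * real n"
  shows "kcnf_prob k n m (\<lambda>F. nat \<lceil>hd_rate k \<alpha> * real n\<rceil> \<le> card (high_degree_vars k n F))
    \<le> 1 / (hd_rate k \<alpha> * real n)"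
proof -
  define s where "s = nat \<lceil>hd_rate k \<alpha> * real n\<rceil>"
  have "0 < hd_rate k \<alpha>"
    using assms(2,3) by (rule hd_rate_pos)
  then have "0 < hd_rate k \<alpha> * real n" "hd_rate k \<alpha> * real n \<le> real s"
    using assms(1) by (simp_all add: s_def)
  then have "0 < s"
    by linarith
  have "kcnf_prob k n m (\<lambda>F. s \<le> card (high_degree_vars k n F))
      \<le> real (n choose s) * real ((m * k) choose (Delta k * s)) * (real s / real n) ^ (Delta k * s)"
    by (rule kcnf_prob_many_high_degree_le_binomial[OF assms(1)])
  also have "\<dots> \<le> (1 / 2) ^ s"
    using assms \<open>0 < s\<close> \<open>hd_rate k \<alpha> * real n \<le> real s\<close> by (intro high_degree_term_le) simp_all
  also have "\<dots> \<le> 1 / real s"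
    using less_exp[of s] \<open>0 < s\<close> by (simp add: power_one_over field_simps)
  also have "\<dots> \<le> 1 / (hd_rate k \<alpha> * real n)"
    using \<open>0 < hd_rate k \<alpha> * real n\<close> \<open>hd_rate k \<alpha> * real n \<le> real s\<close> \<open>0 < s\<close>
    by (intro divide_left_mono) simp_all
  finally show ?thesis
    by (simp add: s_def)
qed

lemma kcnf_prob_not_expanding_le:
  fixes \<alpha> :: real
  assumes "3 \<le> k" "0 < n" "0 < \<alpha>" "real m \<le> \<alpha> * real n"
    and "(k - 2) * T \<le> n" "expansion_rate k \<alpha> * real T / real n \<le> 1 / 2"
  shows "kcnf_prob k n m (\<lambda>F. \<not> expanding k F T) \<le> 4 * expansion_rate k \<alpha> / real n"
proof -
  have "kcnf_prob k n m (\<lambda>F. \<not> expanding k F T)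
      \<le> (\<Sum>t=1..T. real (m choose t) * real (n choose ((k - 2) * t)) * (real ((k - 2) * t) / real n) ^ (t * k))"
    by (rule kcnf_prob_not_expanding_le_binomial_sum[OF assms(2,5)])
  also have "\<dots> \<le> (\<Sum>t=1..T. (expansion_rate k \<alpha> * real t / real n) ^ t)"
    using assms(1-4) by (intro sum_mono expansion_term_le) simp_all
  also have "\<dots> \<le> 4 * expansion_rate k \<alpha> / real n"
    using assms(2,3,6) by (intro sum_ratio_power_le) (simp_all add: expansion_rate_def)
  finally show ?thesis .
qed

lemma r0_distributed_card_ge:
  fixes \<alpha> :: real
  assumes k: "1000000 \<le> k" and \<alpha>: "0 < \<alpha>" "\<alpha> \<le> alpha0 k" and n: "2 / (\<alpha> * slack k) \<le> real n"
    and F: "F \<in> kcnf_space k n m" and expands: "expanding k F (card (high_degree_vars k n F) + 1)"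
    and V: "r0_distributed k n F V"
    and m: "\<alpha> * real n - 1 \<le> real m"
    and few: "real (card (high_degree_vars k n F)) < hd_rate k \<alpha> * real n"
  shows "(r0 - delta) * (real k * \<alpha> / real (Delta k)) * real n \<le> real (card V)"
proof -
  let ?v0 = "real (card (high_degree_vars k n F))"
  have "0 < slack k"
    using slack_pos[OF k] .
  then have "1 \<le> \<alpha> * slack k / 2 * real n"
    using n \<alpha>(1) by (simp add: field_simps)
  moreover have "?v0 \<le> \<alpha> * slack k / 2 * real n"
    using few hd_rate_le_slack[OF k \<alpha>] mult_right_mono[of "hd_rate k \<alpha>" "\<alpha> * slack k / 2" "real n"]
    by simp
  moreover have "\<alpha> * real n * (1 - slack k) = \<alpha> * real n - 2 * (\<alpha> * slack k / 2 * real n)"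
    by (simp add: algebra_simps)
  ultimately have lost: "\<alpha> * real n * (1 - slack k) \<le> real m - ?v0"
    using m by linarith
  have "4 \<le> k"
    using k by simp
  have "(r0 - delta) * real k * (\<alpha> * real n) = \<alpha> * real n * (1 - slack k) * (r0 * (real k - 3))"
    unfolding slack_mult_eq[OF \<open>4 \<le> k\<close>, symmetric] by (simp only: mult_ac)
  also have "\<dots> \<le> (real m - ?v0) * (r0 * (real k - 3))"
    using lost by (rule mult_right_mono) (use k in \<open>simp add: r0_def\<close>)
  also have "\<dots> \<le> real (card V) * real (Delta k)"
    using k by (intro r0_distributed_card_mult_Delta_ge[OF F _ expands V]) simp
  finally show ?thesis
    using Delta_pos[of k] by (simp add: field_simps)
qed

lemma kcnf_prob_not_expanding_ceiling_le:
  fixes \<alpha> :: real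
  assumes k: "1000000 \<le> k" and \<alpha>: "0 < \<alpha>" "\<alpha> \<le> alpha0 k"
    and n: "4 * expansion_rate k \<alpha> \<le> real n" "2 * real k \<le> real n"
    and "real m \<le> \<alpha> * real n"
  shows "kcnf_prob k n m (\<lambda>F. \<not> expanding k F (nat \<lceil>hd_rate k \<alpha> * real n\<rceil>))
    \<le> 4 * expansion_rate k \<alpha> / real n"
proof -
  define s where "s = nat \<lceil>hd_rate k \<alpha> * real n\<rceil>"
  define c where "c = expansion_rate k \<alpha>"
  have "0 < real n" "0 \<le> c"
    using n(2) k \<alpha>(1) by (simp_all add: c_def expansion_rate_def)
  have "0 < hd_rate k \<alpha>"
    using \<alpha>(1) k by (simp add: hd_rate_pos)
  then have s: "real s < hd_rate k \<alpha> * real n + 1"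
    unfolding s_def using \<open>0 < real n\<close> by (intro real_nat_ceiling_less) simp
  have "real ((k - 2) * s) = real (k - 2) * real s"
    by simp
  also have "\<dots> \<le> real k * (hd_rate k \<alpha> * real n + 1)"
    using s by (intro mult_mono) simp_all
  also have "\<dots> \<le> real n / 2 + real k"
    using hd_rate_le_inverse[OF k \<alpha>] k \<open>0 < real n\<close>
    by (simp add: field_simps)
  finally have "(k - 2) * s \<le> n"
    using n(2) by linarith
  moreover have "c * real s / real n \<le> 1 / 2"
  proof -
    have "c * real s / real n \<le> c * (hd_rate k \<alpha> * real n + 1) / real n"
      using s \<open>0 \<le> c\<close> \<open>0 < real n\<close> by (intro divide_right_mono mult_left_mono) simp_all
    also have "\<dots> = hd_rate k \<alpha> * c + c / real n"
      using \<open>0 < real n\<close> by (simp add: field_simps)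
    also have "\<dots> \<le> 1 / 4 + 1 / 4"
      using hd_rate_mult_expansion_rate_le[OF k \<alpha>] n(1) \<open>0 < real n\<close>
      by (intro add_mono) (simp_all add: c_def field_simps)
    finally show ?thesis
      by simp
  qed
  ultimately show ?thesis
    using k \<alpha>(1) \<open>0 < real n\<close> assms(6)
    by (intro kcnf_prob_not_expanding_le) (simp_all add: s_def c_def)
qed

lemma kcnf_prob_r0_distributed_card_ge:
  fixes \<alpha> :: real
  assumes k: "1000000 \<le> k" and \<alpha>: "0 < \<alpha>" "\<alpha> \<le> alpha0 k"
    and n: "4 * expansion_rate k \<alpha> \<le> real n" "2 * real k \<le> real n" "2 / (\<alpha> * slack k) \<le> real n"
  shows "1 - (1 / hd_rate k \<alpha> + 4 * expansion_rate k \<alpha>) / real n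
    \<le> kcnf_prob k n (nat \<lfloor>\<alpha> * real n\<rfloor>) (\<lambda>F. \<forall>V. r0_distributed k n F V \<longrightarrow>
      real (card V) \<ge> (r0 - delta) * (real k * \<alpha> / real (Delta k)) * real n)"
proof -
  define m where "m = nat \<lfloor>\<alpha> * real n\<rfloor>"
  define s where "s = nat \<lceil>hd_rate k \<alpha> * real n\<rceil>"
  have "0 < n"
    using n(2) k by simp
  have m: "real m \<le> \<alpha> * real n" "\<alpha> * real n - 1 \<le> real m"
    unfolding m_def using \<alpha>(1) by simp linarith
  have "1 - kcnf_prob k n m (\<lambda>F. s \<le> card (high_degree_vars k n F))
      - kcnf_prob k n m (\<lambda>F. \<not> expanding k F s)
    \<le> kcnf_prob k n m (\<lambda>F. \<forall>V. r0_distributed k n F V \<longrightarrow>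
      real (card V) \<ge> (r0 - delta) * (real k * \<alpha> / real (Delta k)) * real n)"
  proof (intro kcnf_prob_ge_1_minus[OF \<open>0 < n\<close>] allI impI)
    fix F V
    assume F: "F \<in> kcnf_space k n m" and few: "\<not> s \<le> card (high_degree_vars k n F)"
      and "\<not> \<not> expanding k F s" and V: "r0_distributed k n F V"
    then have "expanding k F (card (high_degree_vars k n F) + 1)"
      by (auto elim: expanding_mono)
    moreover have "real (card (high_degree_vars k n F)) < hd_rate k \<alpha> * real n"
      using few real_nat_ceiling_less[of "hd_rate k \<alpha> * real n"] hd_rate_pos[OF \<alpha>(1), of k] k
      unfolding s_def by simp
    ultimately show "real (card V) \<ge> (r0 - delta) * (real k * \<alpha> / real (Delta k)) * real n"
      by (rule r0_distributed_card_ge[OF k \<alpha> n(3) F _ V m(2)])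
  qed
  moreover have "kcnf_prob k n m (\<lambda>F. s \<le> card (high_degree_vars k n F)) \<le> 1 / (hd_rate k \<alpha> * real n)"
    unfolding s_def using \<open>0 < n\<close> \<alpha>(1) k m(1)
    by (intro kcnf_prob_many_high_degree_le) simp_all
  moreover have "kcnf_prob k n m (\<lambda>F. \<not> expanding k F s) \<le> 4 * expansion_rate k \<alpha> / real n"
    unfolding s_def using k \<alpha> n(1,2) m(1) by (rule kcnf_prob_not_expanding_ceiling_le)
  ultimately show ?thesis
    unfolding m_def by (simp add: add_divide_distrib)
qed

theorem corollary5p8:
  shows "\<exists>k0::nat. \<forall>k\<ge>k0. \<forall>\<alpha>::real. 0 < \<alpha> \<longrightarrow> \<alpha> \<le> alpha0 k \<longrightarrow>
    (\<lambda>n. kcnf_prob k n (nat \<lfloor>\<alpha> * real n\<rfloor>)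
       (\<lambda>F. \<forall>V. r0_distributed k n F V \<longrightarrow>
          real (card V) \<ge> (r0 - delta) * (real k * \<alpha> / real (Delta k)) * real n))
    \<longlonglongrightarrow> 1"
proof (intro exI[of _ 1000000] allI impI)
  fix k :: nat and \<alpha> :: real
  assume k: "1000000 \<le> k" and \<alpha>: "0 < \<alpha>" "\<alpha> \<le> alpha0 k"
  let ?P = "\<lambda>n. kcnf_prob k n (nat \<lfloor>\<alpha> * real n\<rfloor>) (\<lambda>F. \<forall>V. r0_distributed k n F V \<longrightarrow>
    real (card V) \<ge> (r0 - delta) * (real k * \<alpha> / real (Delta k)) * real n)"
  define C where "C = 1 / hd_rate k \<alpha> + 4 * expansion_rate k \<alpha>"
  obtain N :: nat where N: "max (max (4 * expansion_rate k \<alpha>) (2 * real k)) (2 / (\<alpha> * slack k)) \<le> real N"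
    using real_arch_simple by blast
  have "\<forall>\<^sub>F n in sequentially. 1 - C / real n \<le> ?P n"
  proof (rule eventually_sequentiallyI[of N])
    fix n
    assume "N \<le> n"
    then show "1 - C / real n \<le> ?P n"
      unfolding C_def using N k \<alpha> by (intro kcnf_prob_r0_distributed_card_ge) auto
  qed
  moreover have "\<forall>\<^sub>F n in sequentially. ?P n \<le> 1"
    by (simp add: kcnf_prob_le_1)
  moreover have "(\<lambda>n. 1 - C / real n) \<longlonglongrightarrow> 1"
    using tendsto_diff[OF tendsto_const lim_const_over_n[of C]] by simp
  ultimately show "?P \<longlonglongrightarrow> 1"
    using real_tendsto_sandwich[of "\<lambda>n. 1 - C / real n" ?P sequentially "\<lambda>_. 1" 1] by simp
qed

end
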